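(* Let $a,b,c,d>0$ and let $G_B:\mathbb R^2\to\mathbb R^2$ be given by $G_B(0)=0$ and $G_B(u)=\frac{1}{|u|}\big((au_1^2+bu_2^2)u_1,\ (cu_1^2+du_2^2)u_2\big)$ for $u\neq0$. If $$\max\{a+c,b+d\}\le 2(b+c+2\sqrt{ad})\quad\text{and}\quad 2(b+c-2\sqrt{ad})\le\min\{a+c,b+d\},$$ then $G_B$ is monotone. If both inequalities are strict, then $G_B$ is $3$-monotone.
   Context: A map $F:\mathbb R^n\to\mathbb R^n$ is monotone if $(F(u)-F(v))\cdot(u-v)\ge0$ for all $u,v$; for $\alpha>0$ it is $\alpha$-monotone if there is $C>0$ with $(F(u)-F(v))\cdot(u-v)\ge C|u-v|^\alpha$ for all $u,v\in\mathbb R^n$. $|\cdot|$ is the Euclidean norm. *)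

theory Defs
  imports "HOL-Analysis.Analysis"
begin

definition monotone_map :: "('a::real_inner \<Rightarrow> 'a) \<Rightarrow> bool" where
  "monotone_map F \<longleftrightarrow> (\<forall>u v. (F u - F v) \<bullet> (u - v) \<ge> 0)"

definition alpha_monotone :: "real \<Rightarrow> ('a::real_inner \<Rightarrow> 'a) \<Rightarrow> bool" where
  "alpha_monotone \<alpha> F \<longleftrightarrow>
     (\<exists>C>0. \<forall>u v. (F u - F v) \<bullet> (u - v) \<ge> C * norm (u - v) powr \<alpha>)"

definition G_B :: "real \<Rightarrow> real \<Rightarrow> real \<Rightarrow> real \<Rightarrow> real^2 \<Rightarrow> real^2" where
  "G_B a b c d u =
     (if u = 0 then 0
      else (1 / norm u) *\<^sub>R
        (vector [(a * (u$1)^2 + b * (u$2)^2) * u$1,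
                 (c * (u$1)^2 + d * (u$2)^2) * u$2] :: real^2))"

end

theory Submission
  imports Defs
begin

text \<open>
  On a line \<open>u(t) = v + t h\<close> the pairing \<open>\<phi>(t) = G\<^sub>B(u(t)) \<bullet> h\<close> satisfies
  \<open>(G\<^sub>B(v + h) - G\<^sub>B v) \<bullet> h = \<phi>(1) - \<phi>(0)\<close>, and away from the origin
  \<open>\<phi>'(t) = Q(u(t), h) / |u(t)|\<^sup>3\<close> for a quartic form \<open>Q\<close>. Bounding the two cross terms of
  \<open>Q\<close> by AM-GM, the hypotheses give \<open>Q(u, h) \<ge> k |u|\<^sup>4 |h|\<^sup>2\<close> with \<open>k = 0\<close>, and with some
  \<open>k > 0\<close> when both inequalities are strict. Since \<open>|u(t)| \<ge> |h| |t - t\<^sub>0|\<close>, where \<open>t\<^sub>0\<close> is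
  the parameter of the point of the line closest to the origin, \<open>\<phi>'\<close> dominates the derivative
  of \<open>k |h|\<^sup>3 (t - t\<^sub>0) |t - t\<^sub>0| / 2\<close>, whose increment over \<open>[0, 1]\<close> is at least
  \<open>k |h|\<^sup>3 / 4\<close>. On a line through the origin \<open>\<phi>\<close> is not differentiable at \<open>t\<^sub>0\<close>, but there
  the homogeneity \<open>G\<^sub>B(s w) = s |s| G\<^sub>B(w)\<close> yields the same bound directly.
\<close>

lemma two_mult_le_weighted_squares:
  fixes a d r x y :: real
  assumes "a > 0" "r^2 = a * d"
  shows "2 * r * x * y \<le> a * x^2 + d * y^2"
proof -
  have "a * (a * x^2 + d * y^2 - 2 * r * x * y) = (a * x - r * y)^2"
    using assms(2) by (simp add: power2_eq_square algebra_simps)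
  then have "a * (a * x^2 + d * y^2 - 2 * r * x * y) \<ge> 0"
    by simp
  with assms(1) show ?thesis
    by (simp add: zero_le_mult_iff)
qed

lemma abs_mult_le_weighted_squares:
  fixes a d r l e x y :: real
  assumes "a > 0" "r^2 = a * d" "0 \<le> l" "\<bar>e\<bar> \<le> 4 * l * r"
  shows "\<bar>e * x * y\<bar> \<le> 2 * l * (a * x^2 + d * y^2)"
proof -
  have "\<bar>e * x * y\<bar> = \<bar>e\<bar> * (\<bar>x\<bar> * \<bar>y\<bar>)"
    by (simp add: abs_mult)
  also have "\<dots> \<le> 4 * l * r * (\<bar>x\<bar> * \<bar>y\<bar>)"
    using assms(4) by (intro mult_right_mono) auto
  also have "\<dots> = 2 * l * (2 * r * \<bar>x\<bar> * \<bar>y\<bar>)"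
    by simp
  also have "\<dots> \<le> 2 * l * (a * \<bar>x\<bar>^2 + d * \<bar>y\<bar>^2)"
    using two_mult_le_weighted_squares[OF assms(1,2), of "\<bar>x\<bar>" "\<bar>y\<bar>"] assms(3)
    by (intro mult_left_mono) auto
  finally show ?thesis
    by simp
qed

lemma obtain_factor_below_one:
  fixes e1 e2 r :: real
  assumes "\<bar>e1\<bar> < r" "\<bar>e2\<bar> < r"
  obtains l where "0 \<le> l" "l < 1" "\<bar>e1\<bar> \<le> l * r" "\<bar>e2\<bar> \<le> l * r"
proof
  have "0 < r"
    using assms(1) by linarith
  then show "0 \<le> max \<bar>e1\<bar> \<bar>e2\<bar> / r" "max \<bar>e1\<bar> \<bar>e2\<bar> / r < 1"
      "\<bar>e1\<bar> \<le> max \<bar>e1\<bar> \<bar>e2\<bar> / r * r" "\<bar>e2\<bar> \<le> max \<bar>e1\<bar> \<bar>e2\<bar> / r * r"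
    using assms by simp_all
qed

lemma norm_mult_abs_le_norm_on_line:
  fixes v h :: "'a::real_inner"
  shows "norm h * \<bar>t + (v \<bullet> h) / (h \<bullet> h)\<bar> \<le> norm (v + t *\<^sub>R h)"
proof (cases "h = 0")
  case False
  have "(v + t *\<^sub>R h) \<bullet> h = norm h ^ 2 * (t + (v \<bullet> h) / (h \<bullet> h))"
    using False by (simp add: inner_add_left power2_norm_eq_inner field_simps)
  then have "norm h ^ 2 * \<bar>t + (v \<bullet> h) / (h \<bullet> h)\<bar> \<le> norm (v + t *\<^sub>R h) * norm h"
    by (metis Cauchy_Schwarz_ineq2 abs_mult abs_norm_cancel power_abs)
  then show ?thesis
    using False by (simp add: power2_eq_square mult.commute)
qed simp

lemma has_real_derivative_mult_abs:
  "((\<lambda>x::real. x * \<bar>x\<bar>) has_real_derivative 2 * \<bar>x\<bar>) (at x)"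
proof (cases "x = 0")
  case True
  have "(\<lambda>h. (x + h) * \<bar>x + h\<bar> / h) = abs"
  proof
    fix h :: real
    show "(x + h) * \<bar>x + h\<bar> / h = \<bar>h\<bar>"
      using True by (cases "h = 0") simp_all
  qed
  moreover have "(abs \<longlongrightarrow> 0) (at (0::real))"
    using tendsto_rabs[OF tendsto_ident_at, of "0::real" UNIV] by simp
  ultimately show ?thesis
    using True by (simp add: DERIV_def)
next
  case False
  have "((\<lambda>y. sgn x * y^2) has_real_derivative sgn x * (2 * x)) (at x)"
    by (auto intro!: derivative_eq_intros)
  then have "((\<lambda>y. sgn x * y^2) has_real_derivative 2 * \<bar>x\<bar>) (at x)"
    by (simp add: abs_sgn mult_ac)
  moreover have "open {y. 0 < y * x}"
    by (intro open_Collect_less continuous_intros)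
  moreover have "x \<in> {y. 0 < y * x}"
    using False not_real_square_gt_zero by blast
  moreover have "sgn x * y^2 = y * \<bar>y\<bar>" if "y \<in> {y. 0 < y * x}" for y
    using that by (cases "0 < x") (simp_all add: power2_eq_square zero_less_mult_iff)
  ultimately show ?thesis
    by (rule has_field_derivative_transform_within_open)
qed

lemma mult_abs_increment_ge: "1 / 2 \<le> (s + 1) * \<bar>s + 1\<bar> - s * \<bar>s\<bar>"
  for s :: real
proof -
  consider "s \<le> -1" | "-1 < s" "s < 0" | "0 \<le> s"
    by linarith
  then show ?thesis
  proof cases
    case 1
    then have "(s + 1) * \<bar>s + 1\<bar> - s * \<bar>s\<bar> = - 2 * s - 1"
      by (simp add: abs_of_nonpos algebra_simps)
    with 1 show ?thesis
      by linarith
  next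
    case 2
    then have "(s + 1) * \<bar>s + 1\<bar> - s * \<bar>s\<bar> = 2 * (s + 1 / 2)^2 + 1 / 2"
      by (simp add: abs_of_pos abs_of_neg power2_eq_square algebra_simps)
    then show ?thesis
      by simp
  next
    case 3
    then have "(s + 1) * \<bar>s + 1\<bar> - s * \<bar>s\<bar> = 2 * s + 1"
      by (simp add: abs_of_nonneg algebra_simps)
    with 3 show ?thesis
      by linarith
  qed
qed

lemma DERIV_le_imp_increment_le:
  fixes f g f' g' :: "real \<Rightarrow> real"
  assumes "x \<le> y"
    and "\<And>t. (f has_real_derivative f' t) (at t)"
    and "\<And>t. (g has_real_derivative g' t) (at t)"
    and "\<And>t. g' t \<le> f' t"
  shows "g y - g x \<le> f y - f x"
proof -
  have d: "\<And>t. ((\<lambda>t. f t - g t) has_real_derivative f' t - g' t) (at t)"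
    using assms(2,3) by (rule DERIV_diff)
  have "continuous_on {x..y} (\<lambda>t. f t - g t)"
    by (rule continuous_at_imp_continuous_on) (use d DERIV_isCont in blast)
  then have "f x - g x \<le> f y - g y"
    using DERIV_nonneg_imp_increasing_open[OF assms(1), of "\<lambda>t. f t - g t"] d assms(4)
    by (metis diff_ge_0_iff_ge)
  then show ?thesis
    by simp
qed

text \<open>For \<open>u = (x, y)\<close> and \<open>h = (h\<^sub>1, h\<^sub>2)\<close>, \<open>cubic_pairing\<close> is \<open>|u| (G\<^sub>B u \<bullet> h)\<close> and
  \<open>derivative_form\<close> is \<open>|u|\<^sup>3\<close> times the derivative of \<open>t \<mapsto> G\<^sub>B(u + t h) \<bullet> h\<close> at \<open>t = 0\<close>.\<close>

definition cubic_pairing :: "real \<Rightarrow> real \<Rightarrow> real \<Rightarrow> real \<Rightarrow> real \<Rightarrow> real \<Rightarrow> real \<Rightarrow> real \<Rightarrow> real" where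
  "cubic_pairing a b c d x y h1 h2 = (a * x^2 + b * y^2) * x * h1 + (c * x^2 + d * y^2) * y * h2"

definition derivative_form :: "real \<Rightarrow> real \<Rightarrow> real \<Rightarrow> real \<Rightarrow> real \<Rightarrow> real \<Rightarrow> real \<Rightarrow> real \<Rightarrow> real" where
  "derivative_form a b c d x y h1 h2 =
     (2 * a * x^4 + 3 * a * x^2 * y^2 + b * y^4) * h1^2
     + x * y * ((2 * b + c - a) * x^2 + (b + 2 * c - d) * y^2) * h1 * h2
     + (c * x^4 + 3 * d * x^2 * y^2 + 2 * d * y^4) * h2^2"

lemma derivative_form_ge:
  fixes a b c d r l k x y h1 h2 :: real
  assumes "a > 0" "d > 0" "r^2 = a * d" "0 \<le> l" "l \<le> 1"
    and "\<bar>2 * b + c - a\<bar> \<le> 4 * l * r" "\<bar>b + 2 * c - d\<bar> \<le> 4 * l * r"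
    and "k \<le> (1 - l) * a" "k \<le> b" "k \<le> (1 - l) * d" "k \<le> c"
  shows "k * (x^2 + y^2)^2 * (h1^2 + h2^2) \<le> derivative_form a b c d x y h1 h2"
proof -
  define p q where "p = x^2" and "q = y^2"
  have pq: "p \<ge> 0" "q \<ge> 0"
    by (simp_all add: p_def q_def)
  have la: "0 \<le> (1 - l) * a" "0 \<le> (1 - l) * d"
    using assms(1,2,5) by simp_all
  have diag1: "((1 - l) * a - k + (1 - l) * a) * p^2 + (2 * ((1 - l) * a - k) + a) * (p * q)
      + (b - k) * q^2 \<ge> 0"
    using la assms(1,5,8,9) pq by (intro add_nonneg_nonneg mult_nonneg_nonneg) simp_all
  have diag2: "(c - k) * p^2 + (2 * ((1 - l) * d - k) + d) * (p * q)
      + ((1 - l) * d - k + (1 - l) * d) * q^2 \<ge> 0"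
    using la assms(2,5,10,11) pq by (intro add_nonneg_nonneg mult_nonneg_nonneg) simp_all
  \<comment> \<open>AM-GM makes the cross terms absorb the fraction \<open>l\<close> of the diagonal terms.\<close>
  have cross1: "(2 * b + c - a) * (p * h1) * (x * y * h2) + 2 * l * (a * (p * h1)^2 + d * (x * y * h2)^2) \<ge> 0"
    using abs_mult_le_weighted_squares[OF assms(1,3,4,6), of "p * h1" "x * y * h2"] by (simp add: abs_le_iff)
  have cross2: "(b + 2 * c - d) * (x * y * h1) * (q * h2) + 2 * l * (a * (x * y * h1)^2 + d * (q * h2)^2) \<ge> 0"
    using abs_mult_le_weighted_squares[OF assms(1,3,4,7), of "x * y * h1" "q * h2"] by (simp add: abs_le_iff)
  have "derivative_form a b c d x y h1 h2 - k * (x^2 + y^2)^2 * (h1^2 + h2^2)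
      = (((1 - l) * a - k + (1 - l) * a) * p^2 + (2 * ((1 - l) * a - k) + a) * (p * q)
          + (b - k) * q^2) * h1^2
      + ((c - k) * p^2 + (2 * ((1 - l) * d - k) + d) * (p * q)
          + ((1 - l) * d - k + (1 - l) * d) * q^2) * h2^2
      + ((2 * b + c - a) * (p * h1) * (x * y * h2) + 2 * l * (a * (p * h1)^2 + d * (x * y * h2)^2))
      + ((b + 2 * c - d) * (x * y * h1) * (q * h2) + 2 * l * (a * (x * y * h1)^2 + d * (q * h2)^2))"
    by (simp add: derivative_form_def p_def q_def power2_eq_square power4_eq_xxxx algebra_simps)
  then show ?thesis
    using diag1 diag2 cross1 cross2 by (smt (verit) zero_le_power2 mult_nonneg_nonneg)
qed

lemma cubic_pairing_quotient_has_derivative: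
  fixes a b c d v1 v2 h1 h2 t :: real
  defines "x \<equiv> v1 + t * h1" and "y \<equiv> v2 + t * h2"
  assumes "x^2 + y^2 \<noteq> 0"
  shows "((\<lambda>t. cubic_pairing a b c d (v1 + t * h1) (v2 + t * h2) h1 h2
              / sqrt ((v1 + t * h1)^2 + (v2 + t * h2)^2))
           has_real_derivative derivative_form a b c d x y h1 h2 / sqrt (x^2 + y^2) ^ 3) (at t)"
proof -
  define R where "R = sqrt (x^2 + y^2)"
  have pos: "0 < x^2 + y^2"
    using assms(3) by (metis add_nonneg_nonneg zero_le_power2 less_eq_real_def)
  then have R: "0 < R" "R^2 = x^2 + y^2"
    by (simp_all add: R_def)
  define M' where "M' = (3 * a * x^2 + b * y^2) * h1^2 + 2 * (b + c) * x * y * h1 * h2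
    + (c * x^2 + 3 * d * y^2) * h2^2"
  have dM: "((\<lambda>t. cubic_pairing a b c d (v1 + t * h1) (v2 + t * h2) h1 h2) has_real_derivative M') (at t)"
    unfolding cubic_pairing_def M'_def x_def y_def
    by (rule derivative_eq_intros refl)+ (simp add: power2_eq_square algebra_simps)
  have dS: "((\<lambda>t. (v1 + t * h1)^2 + (v2 + t * h2)^2) has_real_derivative 2 * (x * h1 + y * h2)) (at t)"
    unfolding x_def y_def by (rule derivative_eq_intros refl)+ (simp add: algebra_simps)
  have "((\<lambda>t. sqrt ((v1 + t * h1)^2 + (v2 + t * h2)^2)) has_real_derivative
      inverse R / 2 * (2 * (x * h1 + y * h2))) (at t)"
    using DERIV_chain2[OF DERIV_real_sqrt[OF pos[unfolded x_def y_def]] dS]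
    unfolding R_def x_def y_def .
  moreover have "inverse R / 2 * (2 * (x * h1 + y * h2)) = (x * h1 + y * h2) / R"
    using R(1) by (simp add: field_simps)
  ultimately have dR: "((\<lambda>t. sqrt ((v1 + t * h1)^2 + (v2 + t * h2)^2)) has_real_derivative
      (x * h1 + y * h2) / R) (at t)"
    by (rule DERIV_cong)
  have "R \<noteq> 0"
    using R(1) by simp
  from DERIV_divide[OF dM dR this[unfolded R_def x_def y_def], folded x_def y_def, folded R_def]
  have "((\<lambda>t. cubic_pairing a b c d (v1 + t * h1) (v2 + t * h2) h1 h2
              / sqrt ((v1 + t * h1)^2 + (v2 + t * h2)^2)) has_real_derivative
      (M' * R - cubic_pairing a b c d x y h1 h2 * ((x * h1 + y * h2) / R)) / (R * R)) (at t)" .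
  moreover have "(M' * R - cubic_pairing a b c d x y h1 h2 * ((x * h1 + y * h2) / R)) / (R * R)
      = (M' * R^2 - cubic_pairing a b c d x y h1 h2 * (x * h1 + y * h2)) / R^3"
    using R(1) by (simp add: field_simps power2_eq_square power3_eq_cube)
  moreover have "M' * R^2 - cubic_pairing a b c d x y h1 h2 * (x * h1 + y * h2) = derivative_form a b c d x y h1 h2"
    unfolding R(2) M'_def
    by (simp add: derivative_form_def cubic_pairing_def power2_eq_square power4_eq_xxxx algebra_simps)
  ultimately show ?thesis
    unfolding R_def by (metis DERIV_cong)
qed
lemma norm_vec2: "norm (w :: real^2) = sqrt ((w$1)^2 + (w$2)^2)"
  by (simp add: norm_eq_sqrt_inner inner_vec_def sum_2 power2_eq_square)

lemma power2_norm_vec2: "norm (w :: real^2) ^ 2 = (w$1)^2 + (w$2)^2"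
  by (simp add: norm_vec2)

lemma G_B_inner:
  "G_B a b c d w \<bullet> h = cubic_pairing a b c d (w$1) (w$2) (h$1) (h$2) / norm w"
  by (cases "w = 0")
    (simp_all add: G_B_def cubic_pairing_def inner_vec_def sum_2 norm_vec2 field_simps add_divide_distrib)

lemma G_B_scaleR: "G_B a b c d (s *\<^sub>R w) = (s * \<bar>s\<bar>) *\<^sub>R G_B a b c d w"
  by (cases "s = 0 \<or> w = 0")
    (auto simp: G_B_def vec_eq_iff forall_2 power2_eq_square field_simps)

lemma G_B_inner_self_ge:
  assumes "0 \<le> b + c" "0 \<le> k" "k \<le> a" "k \<le> d"
  shows "k / 2 * norm h ^ 3 \<le> G_B a b c d h \<bullet> h"
proof (cases "h = 0")
  case False
  define x y where "x = h$1" and "y = h$2"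
  have "norm h ^ 2 = x^2 + y^2"
    by (simp add: power2_norm_vec2 x_def y_def)
  then have n4: "(x^2 + y^2)^2 = norm h ^ 4"
    by (metis power_mult num_double numeral_times_numeral)
  have "k / 2 * (x^2 + y^2)^2 \<le> cubic_pairing a b c d x y x y"
  proof -
    have "cubic_pairing a b c d x y x y - k / 2 * (x^2 + y^2)^2
        = (a - k) * (x^2)^2 + (d - k) * (y^2)^2 + (b + c) * (x^2 * y^2) + k / 2 * (x^2 - y^2)^2"
      by (simp add: cubic_pairing_def power2_eq_square algebra_simps)
    moreover have "0 \<le> (a - k) * (x^2)^2" "0 \<le> (d - k) * (y^2)^2"
        "0 \<le> (b + c) * (x^2 * y^2)" "0 \<le> k / 2 * (x^2 - y^2)^2"
      using assms by (simp_all add: mult_nonneg_nonneg)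
    ultimately show ?thesis
      by linarith
  qed
  then have M: "k / 2 * norm h ^ 4 \<le> cubic_pairing a b c d x y x y"
    by (simp add: n4)
  have "k / 2 * norm h ^ 3 = k / 2 * norm h ^ 4 / norm h"
    using False by (simp add: power_numeral_reduce)
  also have "\<dots> \<le> cubic_pairing a b c d x y x y / norm h"
    using M by (rule divide_right_mono) simp
  also have "\<dots> = G_B a b c d h \<bullet> h"
    by (simp add: G_B_inner x_def y_def)
  finally show ?thesis .
qed simp

lemma G_B_inner_on_line_has_derivative:
  fixes v h :: "real^2"
  assumes "v + t *\<^sub>R h \<noteq> 0"
  shows "((\<lambda>t. G_B a b c d (v + t *\<^sub>R h) \<bullet> h) has_real_derivative
    derivative_form a b c d ((v + t *\<^sub>R h)$1) ((v + t *\<^sub>R h)$2) (h$1) (h$2) / norm (v + t *\<^sub>R h) ^ 3) (at t)"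
proof -
  have "(\<lambda>t. G_B a b c d (v + t *\<^sub>R h) \<bullet> h) = (\<lambda>t. cubic_pairing a b c d (v$1 + t * h$1) (v$2 + t * h$2) (h$1) (h$2)
      / sqrt ((v$1 + t * h$1)^2 + (v$2 + t * h$2)^2))"
    by (simp add: fun_eq_iff G_B_inner norm_vec2)
  moreover have "(v$1 + t * h$1)^2 + (v$2 + t * h$2)^2 \<noteq> 0"
    using assms power2_norm_vec2[of "v + t *\<^sub>R h"] by auto
  ultimately show ?thesis
    using cubic_pairing_quotient_has_derivative by (simp add: norm_vec2)
qed

lemma G_B_inner_on_line_derivative_ge:
  fixes v h :: "real^2"
  assumes "v + t *\<^sub>R h \<noteq> 0" "0 \<le> k"
    and "\<And>x y. k * (x^2 + y^2)^2 * ((h$1)^2 + (h$2)^2) \<le> derivative_form a b c d x y (h$1) (h$2)"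
  shows "k * norm h ^ 3 * \<bar>t + (v \<bullet> h) / (h \<bullet> h)\<bar>
    \<le> derivative_form a b c d ((v + t *\<^sub>R h)$1) ((v + t *\<^sub>R h)$2) (h$1) (h$2) / norm (v + t *\<^sub>R h) ^ 3"
proof -
  define w where "w = v + t *\<^sub>R h"
  have w: "0 < norm w" "norm w ^ 2 = (w$1)^2 + (w$2)^2"
    using assms(1) power2_norm_vec2[of w] by (simp_all add: w_def)
  have "k * norm h ^ 3 * \<bar>t + (v \<bullet> h) / (h \<bullet> h)\<bar> = k * norm h ^ 2 * (norm h * \<bar>t + (v \<bullet> h) / (h \<bullet> h)\<bar>)"
    by (simp add: power2_eq_square power3_eq_cube)
  also have "\<dots> \<le> k * norm h ^ 2 * norm w"
    using norm_mult_abs_le_norm_on_line[of h t v] assms(2) by (intro mult_left_mono) (simp_all add: w_def)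
  also have "\<dots> = k * (norm w ^ 2)^2 * norm h ^ 2 / norm w ^ 3"
    using w(1) by (simp add: field_simps power2_eq_square power3_eq_cube)
  also have "\<dots> \<le> derivative_form a b c d (w$1) (w$2) (h$1) (h$2) / norm w ^ 3"
    using assms(3)[of "w$1" "w$2"] w by (simp add: power2_norm_vec2 divide_right_mono)
  finally show ?thesis
    by (simp add: w_def)
qed

lemma G_B_increment_on_line_through_origin:
  fixes v h :: "real^2"
  assumes "0 \<le> b + c" "0 \<le> k" "k \<le> a" "k \<le> d" and "v = s *\<^sub>R h"
  shows "k / 4 * norm h ^ 3 \<le> (G_B a b c d (v + h) - G_B a b c d v) \<bullet> h"
proof -
  have "v + h = (s + 1) *\<^sub>R h"
    using assms(5) by (simp add: scaleR_add_left)
  then have "(G_B a b c d (v + h) - G_B a b c d v) \<bullet> h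
      = ((s + 1) * \<bar>s + 1\<bar> - s * \<bar>s\<bar>) * (G_B a b c d h \<bullet> h)"
    using assms(5) by (simp add: G_B_scaleR inner_diff_left left_diff_distrib)
  moreover have "1 / 2 * (k / 2 * norm h ^ 3) \<le> ((s + 1) * \<bar>s + 1\<bar> - s * \<bar>s\<bar>) * (G_B a b c d h \<bullet> h)"
    using mult_abs_increment_ge[of s] G_B_inner_self_ge[OF assms(1-4), of h] assms(2)
    by (intro mult_mono) auto
  ultimately show ?thesis
    by simp
qed

lemma G_B_increment_off_origin:
  fixes v h :: "real^2"
  assumes "\<And>t. v + t *\<^sub>R h \<noteq> 0" "0 \<le> k"
    and "\<And>x y. k * (x^2 + y^2)^2 * ((h$1)^2 + (h$2)^2) \<le> derivative_form a b c d x y (h$1) (h$2)"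
  shows "k / 4 * norm h ^ 3 \<le> (G_B a b c d (v + h) - G_B a b c d v) \<bullet> h"
proof -
  \<comment> \<open>\<open>-s\<close> is the parameter of the point of the line closest to the origin.\<close>
  define s where "s = (v \<bullet> h) / (h \<bullet> h)"
  define \<phi> where "\<phi> t = G_B a b c d (v + t *\<^sub>R h) \<bullet> h" for t
  define \<phi>' where "\<phi>' t = derivative_form a b c d ((v + t *\<^sub>R h)$1) ((v + t *\<^sub>R h)$2) (h$1) (h$2)
    / norm (v + t *\<^sub>R h) ^ 3" for t
  define g where "g t = k * norm h ^ 3 / 2 * ((t + s) * \<bar>t + s\<bar>)" for t
  have d\<phi>: "(\<phi> has_real_derivative \<phi>' t) (at t)" for t
    unfolding \<phi>_def \<phi>'_def using assms(1) by (rule G_B_inner_on_line_has_derivative)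
  have shifted: "((\<lambda>t. (t + s) * \<bar>t + s\<bar>) has_real_derivative 2 * \<bar>t + s\<bar> * 1) (at t)" for t
    by (rule DERIV_chain2[OF has_real_derivative_mult_abs]) (auto intro!: derivative_eq_intros)
  have dg: "(g has_real_derivative k * norm h ^ 3 * \<bar>t + s\<bar>) (at t)" for t
    using DERIV_cmult[OF shifted[of t], of "k * norm h ^ 3 / 2"] unfolding g_def
    by (rule DERIV_cong) simp
  have g_le: "k * norm h ^ 3 * \<bar>t + s\<bar> \<le> \<phi>' t" for t
    unfolding s_def \<phi>'_def using assms by (rule G_B_inner_on_line_derivative_ge)
  have "g 1 - g 0 \<le> \<phi> 1 - \<phi> 0"
    using DERIV_le_imp_increment_le[of 0 1, OF _ d\<phi> dg g_le] by simp
  moreover have "k / 4 * norm h ^ 3 \<le> g 1 - g 0"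
  proof -
    have "g 1 - g 0 = k * norm h ^ 3 / 2 * ((s + 1) * \<bar>s + 1\<bar> - s * \<bar>s\<bar>)"
      by (simp add: g_def algebra_simps)
    moreover have "k * norm h ^ 3 / 2 * (1 / 2) \<le> k * norm h ^ 3 / 2 * ((s + 1) * \<bar>s + 1\<bar> - s * \<bar>s\<bar>)"
      using mult_abs_increment_ge[of s] assms(2) by (intro mult_left_mono) auto
    ultimately show ?thesis
      by simp
  qed
  ultimately show ?thesis
    by (simp add: \<phi>_def inner_diff_left)
qed

lemma G_B_inner_diff_ge:
  fixes u v :: "real^2"
  assumes "a > 0" "d > 0" "0 \<le> l" "l \<le> 1"
    and "\<bar>2 * b + c - a\<bar> \<le> 4 * l * sqrt (a * d)" "\<bar>b + 2 * c - d\<bar> \<le> 4 * l * sqrt (a * d)"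
    and "0 \<le> k" "k \<le> (1 - l) * a" "k \<le> b" "k \<le> (1 - l) * d" "k \<le> c"
  shows "k / 4 * norm (u - v) ^ 3 \<le> (G_B a b c d u - G_B a b c d v) \<bullet> (u - v)"
proof -
  define h where "h = u - v"
  have "k / 4 * norm h ^ 3 \<le> (G_B a b c d (v + h) - G_B a b c d v) \<bullet> h"
  proof (cases "\<exists>s. v = s *\<^sub>R h")
    case True
    then obtain s where "v = s *\<^sub>R h"
      by blast
    moreover have "(1 - l) * a \<le> a" "(1 - l) * d \<le> d"
      using assms(1-3) by (simp_all add: algebra_simps)
    ultimately show ?thesis
      using assms(7-11) by (intro G_B_increment_on_line_through_origin) auto
  next
    case False
    then have "v + t *\<^sub>R h \<noteq> 0" for t
      by (metis add.commute add_eq_0_iff2 scaleR_minus_left)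
    moreover have "(sqrt (a * d))^2 = a * d"
      using assms(1,2) by simp
    ultimately show ?thesis
      using assms by (intro G_B_increment_off_origin derivative_form_ge) auto
  qed
  then show ?thesis
    by (simp add: h_def)
qed

lemma monotone_map_G_B:
  assumes "a > 0" "0 \<le> b" "0 \<le> c" "d > 0"
    and "\<bar>2 * b + c - a\<bar> \<le> 4 * sqrt (a * d)" "\<bar>b + 2 * c - d\<bar> \<le> 4 * sqrt (a * d)"
  shows "monotone_map (G_B a b c d)"
  using assms G_B_inner_diff_ge[of a d 1 b c 0] by (simp add: monotone_map_def)

lemma alpha_monotone_3_G_B:
  assumes "a > 0" "b > 0" "c > 0" "d > 0"
    and "\<bar>2 * b + c - a\<bar> < 4 * sqrt (a * d)" "\<bar>b + 2 * c - d\<bar> < 4 * sqrt (a * d)"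
  shows "alpha_monotone 3 (G_B a b c d)"
proof -
  obtain l where l: "0 \<le> l" "l < 1"
    "\<bar>2 * b + c - a\<bar> \<le> 4 * l * sqrt (a * d)" "\<bar>b + 2 * c - d\<bar> \<le> 4 * l * sqrt (a * d)"
    using assms(5,6) by (rule obtain_factor_below_one) (simp_all add: mult_ac)
  define k where "k = min (min ((1 - l) * a) b) (min ((1 - l) * d) c)"
  have k: "0 < k" "k \<le> (1 - l) * a" "k \<le> b" "k \<le> (1 - l) * d" "k \<le> c"
    using l(2) assms(1-4) by (simp_all add: k_def)
  have "k / 4 * norm (u - v) powr 3 \<le> (G_B a b c d u - G_B a b c d v) \<bullet> (u - v)" for u v
    using G_B_inner_diff_ge[of a d l b c k u v] assms l k by simp
  with k(1) show ?thesis
    unfolding alpha_monotone_def by (intro exI[of _ "k / 4"]) simp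
qed

theorem mainTheorem3:
  fixes a b c d :: real
  assumes "a > 0" "b > 0" "c > 0" "d > 0"
  shows "(max (a + c) (b + d) \<le> 2 * (b + c + 2 * sqrt (a * d)) \<and>
          2 * (b + c - 2 * sqrt (a * d)) \<le> min (a + c) (b + d)
            \<longrightarrow> monotone_map (G_B a b c d))
       \<and> (max (a + c) (b + d) < 2 * (b + c + 2 * sqrt (a * d)) \<and>
          2 * (b + c - 2 * sqrt (a * d)) < min (a + c) (b + d)
            \<longrightarrow> alpha_monotone 3 (G_B a b c d))"
proof (intro conjI impI)
  assume "max (a + c) (b + d) \<le> 2 * (b + c + 2 * sqrt (a * d)) \<and>
    2 * (b + c - 2 * sqrt (a * d)) \<le> min (a + c) (b + d)"
  then show "monotone_map (G_B a b c d)"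
    using assms by (intro monotone_map_G_B) (auto simp: abs_le_iff)
next
  assume "max (a + c) (b + d) < 2 * (b + c + 2 * sqrt (a * d)) \<and>
    2 * (b + c - 2 * sqrt (a * d)) < min (a + c) (b + d)"
  then show "alpha_monotone 3 (G_B a b c d)"
    using assms by (intro alpha_monotone_3_G_B) (auto simp: abs_less_iff)
qed

end
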